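(* Consider the two-SP bandwidth allocation game with minimum small-cell bandwidth constraints described in the context. This game has a Nash equilibrium, and the Nash equilibrium is unique. Moreover, the total small-cell bandwidth $B_{1,S}+B_{2,S}$ at this equilibrium is at least the total small-cell bandwidth $B_{1,S}^{\mathrm{NE}}+B_{2,S}^{\mathrm{NE}}$ at the Nash equilibrium of the same game without the regulatory constraints.
   Context: Two service providers (SPs) $i=1,2$. SP $i$ owns bandwidth $B_i>0$ and chooses macro-cell bandwidth $B_{i,M}\ge0$ and small-cell bandwidth $B_{i,S}$ with $B_{i,M}+B_{i,S}\le B_i$ and $B_{i,S}\ge B_{i,S}^0$ (regulatory constraint), where $0\le B_{i,S}^0\le B_i$ are given; "without the regulatory constraints" means $B_{i,S}^0=0$. Parameters: $R_0>0$, $\lambda_S>1$, a mass $N_m>0$ of mobile users (served only by macro-cells) and a mass $N_f>0$ of fixed users, each with utility $u(r)=r^{1-\alpha}/(1-\alpha)$, $\alpha\in(0,1)$. SPs set per-unit-rate prices in a second stage after bandwidths are fixed; the second-stage price equilibrium is market-clearing, so that with $R_M=\frac{(B_{1,M}+B_{2,M})R_0}{N_m}$ and $R_S=\frac{\lambda_S(B_{1,S}+B_{2,S})R_0}{N_f}$ the macro and small-cell prices are $u'(R_M)=R_M^{-\alpha}$ and $u'(R_S)=R_S^{-\alpha}$. The payoff of SP $i$ in the bandwidth game is its revenue $S_i=\lambda_SB_{i,S}R_0\,u'(R_S)+B_{i,M}R_0\,u'(R_M)$, and a Nash equilibrium is a pair of feasible allocations in which each SP maximizes $S_i$ given the other's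 allocation. Without the regulatory constraints the unique Nash equilibrium is $B_{i,S}^{\mathrm{NE}}=\frac{N_f\lambda_S^{1/\alpha-1}B_i}{N_f\lambda_S^{1/\alpha-1}+N_m}$, $B_{i,M}^{\mathrm{NE}}=\frac{N_mB_i}{N_f\lambda_S^{1/\alpha-1}+N_m}$, $i=1,2$. *)

theory Defs
  imports Complex_Main
begin

text \<open>Marginal utility u'(r) = r^(-alpha) for u(r) = r^(1-alpha)/(1-alpha).\<close>
definition uprime :: "real \<Rightarrow> real \<Rightarrow> real" where
  "uprime \<alpha> r = r powr (- \<alpha>)"

text \<open>An allocation of an SP is a pair (B_S, B_M) of small-cell and macro-cell bandwidth.
  Feasibility: B_M \<ge> 0, B_S \<ge> B_S^0, B_M + B_S \<le> B.\<close>
definition feasible :: "real \<Rightarrow> real \<Rightarrow> real \<times> real \<Rightarrow> bool" where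
  "feasible B B0 x \<longleftrightarrow> snd x \<ge> 0 \<and> fst x \<ge> B0 \<and> fst x + snd x \<le> B"

definition revenue ::
  "real \<Rightarrow> real \<Rightarrow> real \<Rightarrow> real \<Rightarrow> real \<Rightarrow> real \<times> real \<Rightarrow> real \<times> real \<Rightarrow> real" where
  "revenue R0 lamS Nm Nf \<alpha> x y =
     (let RM = (snd x + snd y) * R0 / Nm;
          RS = lamS * (fst x + fst y) * R0 / Nf
      in lamS * fst x * R0 * uprime \<alpha> RS + snd x * R0 * uprime \<alpha> RM)"

definition is_NE ::
  "real \<Rightarrow> real \<Rightarrow> real \<Rightarrow> real \<Rightarrow> real \<Rightarrow> real \<Rightarrow> real \<Rightarrow> real \<Rightarrow> real
   \<Rightarrow> real \<times> real \<Rightarrow> real \<times> real \<Rightarrow> bool" where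
  "is_NE R0 lamS Nm Nf \<alpha> B1 B2 B10 B20 x1 x2 \<longleftrightarrow>
     feasible B1 B10 x1 \<and> feasible B2 B20 x2 \<and>
     (\<forall>z. feasible B1 B10 z \<longrightarrow> revenue R0 lamS Nm Nf \<alpha> z x2 \<le> revenue R0 lamS Nm Nf \<alpha> x1 x2) \<and>
     (\<forall>z. feasible B2 B20 z \<longrightarrow> revenue R0 lamS Nm Nf \<alpha> z x1 \<le> revenue R0 lamS Nm Nf \<alpha> x2 x1)"

end

theory Submission
  imports Defs "HOL-Analysis.Convex"
begin

text \<open>With \<open>G(x, y) = x * (x + y) powr (- a)\<close> the payoff of an SP is \<open>A * G(s, s') + C * G(m, m')\<close>
  (own and rival small-cell and macro-cell bandwidths). \<open>G\<close> is increasing and concave in its first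
  argument, so best responses use the whole budget and are characterised by first-order conditions
  involving only the shares \<open>s / S\<close>, \<open>m / M\<close> and the ratio \<open>k = A S powr (- a) / (C M powr (- a))\<close> of the
  marginal prices at the aggregates \<open>S\<close>, \<open>M\<close>.
  Adding the conditions of both SPs forces \<open>k \<le> 1\<close> at every equilibrium, i.e.
  \<open>A M powr a \<le> C S powr a\<close>; the unconstrained equilibrium has \<open>k = 1\<close>, which gives the lower bound on
  \<open>S\<close>. Since \<open>k\<close> strictly decreases in \<open>S\<close>, the first-order conditions of two equilibria with different
  aggregates contradict each other, and for a fixed aggregate each share is unique. Existence follows
  from the intermediate value theorem for the aggregate map sending \<open>S\<close> to the sum of the clamped
  solutions of the first-order conditions.\<close>

definition share_revenue :: "real \<Rightarrow> real \<Rightarrow> real \<Rightarrow> real" where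
  "share_revenue a x y = x * (x + y) powr (- a)"

definition share_marginal :: "real \<Rightarrow> real \<Rightarrow> real \<Rightarrow> real" where
  "share_marginal a x y = (x + y) powr (- a) * (1 - a * (x / (x + y)))"

lemma powr_le_tangent_one:
  fixes a r :: real
  assumes "0 < a" "a < 1" "0 < r"
  shows "r powr (1 - a) \<le> (1 - a) * r + a"
  using Youngs_inequality_0[of "1 - a" a r 1] assms by simp

lemma powr_neg_ge_tangent_one:
  fixes a r :: real
  assumes "0 \<le> a" "0 < r"
  shows "1 - a * (r - 1) \<le> r powr (- a)"
proof -
  have "1 - a * ln r \<le> exp (- a * ln r)"
    using exp_ge_add_one_self[of "- a * ln r"] by simp
  moreover have "a * ln r \<le> a * (r - 1)"
    using assms ln_le_minus_one[of r] mult_left_mono by blast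
  ultimately show ?thesis
    using assms by (simp add: powr_def)
qed

text \<open>With \<open>x + y = T0 * r\<close> this reduces to the tangent bounds at \<open>r = 1\<close> for \<open>r powr (1 - a)\<close>
  and \<open>r powr (- a)\<close>.\<close>
lemma share_revenue_tangent:
  assumes a: "0 < a" "a < 1" and x: "0 \<le> x" "0 \<le> y" "0 \<le> x0" "0 < x0 + y"
  shows "share_revenue a x y \<le> share_revenue a x0 y + share_marginal a x0 y * (x - x0)"
proof -
  define T0 where "T0 = x0 + y"
  define p where "p = T0 powr (- a)"
  have T0: "0 < T0" and p: "0 < p"
    using x by (simp_all add: T0_def p_def)
  have rhs: "share_revenue a x0 y + share_marginal a x0 y * (x - x0)
      = p * (a * T0 + (1 - a) * (x + y) - y + a * y * ((x + y) - T0) / T0)"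
    unfolding share_revenue_def share_marginal_def T0_def[symmetric] p_def[symmetric]
    using T0 by (simp add: field_simps T0_def)
  show ?thesis
  proof (cases "x + y = 0")
    case True
    then have "x = 0" "y = 0"
      using x by auto
    then show ?thesis
      unfolding rhs using a T0 p by (simp add: share_revenue_def)
  next
    case False
    define r where "r = (x + y) / T0"
    have r: "0 < r" and T: "x + y = T0 * r"
      using False x T0 by (simp_all add: r_def)
    have "T0 powr (1 - a) = T0 * p"
      using T0 by (simp add: p_def powr_diff powr_minus field_simps)
    then have concave: "(x + y) powr (1 - a) \<le> T0 * p * ((1 - a) * r + a)"
      using mult_left_mono[OF powr_le_tangent_one[OF a r], of p] p T0 r by (simp add: T powr_mult)
    have "p * (1 - a * (r - 1)) \<le> (x + y) powr (- a)"
      using powr_neg_ge_tangent_one[of a r] a T0 r by (simp add: T p_def powr_mult)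
    then have convex: "y * (p * (1 - a * (r - 1))) \<le> y * (x + y) powr (- a)"
      using x(2) by (rule mult_left_mono)
    have "share_revenue a x y = (x + y) powr (1 - a) - y * (x + y) powr (- a)"
      unfolding share_revenue_def using False x
      by (simp add: powr_diff powr_minus field_simps)
    also have "\<dots> \<le> T0 * p * ((1 - a) * r + a) - y * (p * (1 - a * (r - 1)))"
      using concave convex by linarith
    also have "\<dots> = p * (a * T0 + (1 - a) * (x + y) - y + a * y * ((x + y) - T0) / T0)"
      unfolding r_def using T0 by (simp add: field_simps)
    finally show ?thesis
      unfolding rhs .
  qed
qed

lemma share_revenue_strict_mono:
  assumes a: "0 < a" "a < 1" and x: "0 \<le> x" "x < x'" "0 \<le> y"
  shows "share_revenue a x y < share_revenue a x' y"
proof (cases "x = 0")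
  case True
  then show ?thesis
    using x by (simp add: share_revenue_def)
next
  case False
  then have xp: "0 < x"
    using x by simp
  define r where "r = (x' + y) / (x + y)"
  have r1: "1 < r"
    using x xp by (simp add: r_def)
  have "x * r powr a < x * r"
    using powr_less_mono[OF a(2) r1] r1 xp by simp
  also have "x * r \<le> x'"
    using x xp by (simp add: r_def field_simps mult_right_mono)
  finally have "x < x' / r powr a"
    using r1 by (simp add: field_simps)
  moreover have "(x' + y) powr (- a) = (x + y) powr (- a) / r powr a"
  proof -
    have "x' + y = (x + y) * r"
      using xp x by (simp add: r_def)
    then show ?thesis
      using xp x r1 by (simp add: powr_mult powr_minus divide_inverse)
  qed
  moreover have "0 < (x + y) powr (- a)"
    using xp x by simp
  ultimately show ?thesis
    unfolding share_revenue_def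
    using mult_strict_right_mono[of x "x' / r powr a" "(x + y) powr (- a)"] by simp
qed

lemma share_revenue_mono:
  assumes "0 < a" "a < 1" "0 \<le> x" "x \<le> x'" "0 \<le> y"
  shows "share_revenue a x y \<le> share_revenue a x' y"
  using share_revenue_strict_mono[of a x x' y] assms by (cases "x = x'") auto

lemma share_revenue_deriv:
  assumes "0 < x0 + y"
  shows "((\<lambda>x. share_revenue a x y) has_real_derivative share_marginal a x0 y) (at x0)"
proof -
  have "((\<lambda>x. x * (x + y) powr (- a)) has_real_derivative
      1 * (x0 + y) powr (- a) + x0 * ((- a) * (x0 + y) powr (- a - 1) * 1)) (at x0)"
    by (rule derivative_eq_intros refl | use assms in simp)+
  moreover have "(x0 + y) powr (- a - 1) = (x0 + y) powr (- a) / (x0 + y)"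
    using assms by (simp add: powr_diff)
  ultimately show ?thesis
    unfolding share_revenue_def share_marginal_def by (simp add: field_simps)
qed

definition game_payoff :: "real \<Rightarrow> real \<Rightarrow> real \<Rightarrow> real \<times> real \<Rightarrow> real \<times> real \<Rightarrow> real" where
  "game_payoff a A C x y = A * share_revenue a (fst x) (fst y) + C * share_revenue a (snd x) (snd y)"

definition payoff_slope :: "real \<Rightarrow> real \<Rightarrow> real \<Rightarrow> real \<times> real \<Rightarrow> real \<times> real \<Rightarrow> real" where
  "payoff_slope a A C x y = A * share_marginal a (fst x) (fst y) - C * share_marginal a (snd x) (snd y)"

definition best_response ::
  "real \<Rightarrow> real \<Rightarrow> real \<Rightarrow> real \<Rightarrow> real \<Rightarrow> real \<times> real \<Rightarrow> real \<times> real \<Rightarrow> bool" where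
  "best_response a A C B B0 x y \<longleftrightarrow>
     feasible B B0 x \<and> (\<forall>z. feasible B B0 z \<longrightarrow> game_payoff a A C z y \<le> game_payoff a A C x y)"

definition equilibrium ::
  "real \<Rightarrow> real \<Rightarrow> real \<Rightarrow> real \<Rightarrow> real \<Rightarrow> real \<Rightarrow> real \<Rightarrow> real \<times> real \<Rightarrow> real \<times> real \<Rightarrow> bool" where
  "equilibrium a A C B1 B2 B10 B20 x1 x2 \<longleftrightarrow>
     best_response a A C B1 B10 x1 x2 \<and> best_response a A C B2 B20 x2 x1"

text \<open>Sufficiency of the first-order conditions: by the tangent inequality, the payoff of any
  feasible \<open>z\<close> is at most the payoff of \<open>x\<close> plus the slope times the small-cell shift \<open>fst z - fst x\<close>.\<close>
lemma best_response_if_slope: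
  assumes a: "0 < a" "a < 1" and AC: "0 < A" "0 < C" and y: "0 \<le> fst y" "0 \<le> snd y"
    and "0 \<le> B0" and x: "feasible B B0 x" "fst x + snd x = B"
    and pos: "0 < fst x + fst y" "0 < snd x + snd y"
    and slope_nonneg: "B0 < fst x \<Longrightarrow> 0 \<le> payoff_slope a A C x y"
    and slope_nonpos: "0 < snd x \<Longrightarrow> payoff_slope a A C x y \<le> 0"
  shows "best_response a A C B B0 x y"
  unfolding best_response_def
proof (intro conjI allI impI x(1))
  fix z assume z: "feasible B B0 z"
  obtain s m where x_eq: "x = (s, m)" by force
  obtain s' m' where y_eq: "y = (s', m')" by force
  obtain zs zm where z_eq: "z = (zs, zm)" by force
  have s: "B0 \<le> s" "0 \<le> m" "B = s + m"
    using x x_eq by (auto simp: feasible_def)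
  have zz: "B0 \<le> zs" "0 \<le> zm" "zs + zm \<le> B"
    using z z_eq by (auto simp: feasible_def)
  have "share_revenue a zm m' \<le> share_revenue a (B - zs) m'"
    using share_revenue_mono[OF a, of zm "B - zs" m'] zz y y_eq by auto
  moreover have "share_revenue a zs s' \<le> share_revenue a s s' + share_marginal a s s' * (zs - s)"
    using share_revenue_tangent[OF a, of zs s' s] zz s \<open>0 \<le> B0\<close> y pos x_eq y_eq by auto
  moreover have "share_revenue a (B - zs) m'
      \<le> share_revenue a m m' + share_marginal a m m' * ((B - zs) - m)"
    using share_revenue_tangent[OF a, of "B - zs" m' m] zz s y pos x_eq y_eq by auto
  ultimately have "game_payoff a A C z y
      \<le> A * (share_revenue a s s' + share_marginal a s s' * (zs - s))
        + C * (share_revenue a m m' + share_marginal a m m' * ((B - zs) - m))"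
    unfolding game_payoff_def using x_eq y_eq z_eq AC
    by (simp add: add_mono mult_left_mono order_trans)
  also have "\<dots> = game_payoff a A C x y + payoff_slope a A C x y * (zs - s)"
    unfolding game_payoff_def payoff_slope_def using x_eq y_eq s(3) by (simp add: algebra_simps)
  also have "\<dots> \<le> game_payoff a A C x y"
  proof -
    consider "zs = s" | "zs < s" "B0 < s" | "s < zs" "0 < m"
      using zz s by linarith
    then have "payoff_slope a A C x y * (zs - s) \<le> 0"
      by cases (use slope_nonneg slope_nonpos x_eq in \<open>auto simp: mult_nonneg_nonpos mult_nonpos_nonneg\<close>)
    then show ?thesis by simp
  qed
  finally show "game_payoff a A C z y \<le> game_payoff a A C x y" .
qed

lemma best_response_full_budget:
  assumes a: "0 < a" "a < 1" and "0 < C" and "0 \<le> snd y"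
    and br: "best_response a A C B B0 x y"
  shows "fst x + snd x = B"
proof (rule ccontr)
  assume "fst x + snd x \<noteq> B"
  obtain s m where x: "x = (s, m)" by force
  have lt: "0 \<le> m" "m < B - s" "B0 \<le> s"
    using br \<open>fst x + snd x \<noteq> B\<close> x by (auto simp: best_response_def feasible_def)
  have "game_payoff a A C x y < game_payoff a A C (s, B - s) y"
    using share_revenue_strict_mono[OF a lt(1,2) \<open>0 \<le> snd y\<close>] \<open>0 < C\<close> x
    by (simp add: game_payoff_def)
  moreover have "game_payoff a A C (s, B - s) y \<le> game_payoff a A C x y"
    using br lt by (simp add: best_response_def feasible_def)
  ultimately show False by simp
qed

lemma game_payoff_transfer_deriv:
  assumes "0 < fst x + fst y" "0 < snd x + snd y"
  shows "((\<lambda>e. game_payoff a A C (fst x + e, snd x - e) y) has_real_derivative payoff_slope a A C x y)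
    (at 0)"
proof -
  have "((\<lambda>e. share_revenue a (x0 + c * e) y') has_real_derivative share_marginal a x0 y' * c) (at 0)"
    if "0 < x0 + y'" for x0 c y'
  proof -
    have "((\<lambda>e. x0 + c * e) has_real_derivative c) (at 0)"
      by (rule derivative_eq_intros refl | simp)+
    from DERIV_chain2[of "\<lambda>x. share_revenue a x y'", OF _ this] share_revenue_deriv[OF that]
    show ?thesis by simp
  qed
  from this[of "fst x" "fst y" 1] this[of "snd x" "snd y" "- 1"] show ?thesis
    unfolding game_payoff_def payoff_slope_def using assms
    by (auto intro!: derivative_eq_intros)
qed

lemma best_response_slope_nonpos:
  assumes br: "best_response a A C B B0 x y"
    and pos: "0 < fst x + fst y" "0 < snd x + snd y" and "0 < snd x"
  shows "payoff_slope a A C x y \<le> 0"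
proof (rule ccontr)
  assume "\<not> ?thesis"
  then have "0 < payoff_slope a A C x y" by simp
  from DERIV_pos_inc_right[OF game_payoff_transfer_deriv[OF pos] this]
  obtain d where d: "0 < d" "\<forall>h>0. h < d \<longrightarrow>
      game_payoff a A C (fst x + 0, snd x - 0) y < game_payoff a A C (fst x + (0 + h), snd x - (0 + h)) y"
    by blast
  define h where "h = min d (snd x) / 2"
  have h: "0 < h" "h < d" "h \<le> snd x"
    using d \<open>0 < snd x\<close> by (auto simp: h_def)
  then have "feasible B B0 (fst x + h, snd x - h)"
    using br by (auto simp: best_response_def feasible_def)
  then show False
    using br d h by (force simp: best_response_def)
qed

lemma best_response_slope_nonneg:
  assumes br: "best_response a A C B B0 x y"
    and pos: "0 < fst x + fst y" "0 < snd x + snd y" and "B0 < fst x"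
  shows "0 \<le> payoff_slope a A C x y"
proof (rule ccontr)
  assume "\<not> ?thesis"
  then have "payoff_slope a A C x y < 0" by simp
  from DERIV_neg_dec_left[OF game_payoff_transfer_deriv[OF pos] this]
  obtain d where d: "0 < d" "\<forall>h>0. h < d \<longrightarrow>
      game_payoff a A C (fst x + 0, snd x - 0) y < game_payoff a A C (fst x + (0 - h), snd x - (0 - h)) y"
    by blast
  define h where "h = min d (fst x - B0) / 2"
  have h: "0 < h" "h < d" "h \<le> fst x - B0"
    using d \<open>B0 < fst x\<close> by (auto simp: h_def)
  then have "feasible B B0 (fst x - h, snd x + h)"
    using br by (auto simp: best_response_def feasible_def)
  then show False
    using br d h by (force simp: best_response_def)
qed

text \<open>Moving a small amount \<open>e\<close> into a segment the opponent leaves empty earns \<open>e powr (1 - a)\<close>,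
  which beats the at most linear loss in the segment it is taken from.\<close>
lemma share_revenue_entry_gain:
  assumes a: "0 < a" "a < 1" and PQ: "0 < P" "0 < Q" and e: "0 < e" "e \<le> m" and "0 \<le> m'"
    and small: "e < (P / Q) powr (1 / a) * (m + m')"
  shows "Q * share_revenue a m m' < P * share_revenue a e 0 + Q * share_revenue a (m - e) m'"
proof -
  define W where "W = m + m'"
  have W: "0 < W"
    using e \<open>0 \<le> m'\<close> by (simp add: W_def)
  have "e powr a < ((P / Q) powr (1 / a) * W) powr a"
    using powr_less_mono2[of a e] a e small by (simp add: W_def)
  also have "\<dots> = (P / Q) * W powr a"
    using PQ W a by (simp add: powr_mult powr_powr)
  finally have "Q * W powr (- a) < P * e powr (- a)"
    using PQ W e by (simp add: powr_minus field_simps)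
  then have "Q * (e * W powr (- a)) < P * (e * e powr (- a))"
    using e by (metis mult.left_commute mult_less_cancel_left_pos)
  moreover have "(m - e) * W powr (- a) \<le> share_revenue a (m - e) m'"
  proof (cases "m = e")
    case False
    then have "W powr (- a) \<le> (m - e + m') powr (- a)"
      using powr_mono2'[of "- a" "m - e + m'" W] a e \<open>0 \<le> m'\<close> by (simp add: W_def)
    then show ?thesis
      unfolding share_revenue_def using e by (simp add: mult_left_mono)
  qed (simp add: share_revenue_def)
  moreover have "share_revenue a e 0 = e * e powr (- a)" "share_revenue a m m' = m * W powr (- a)"
    by (simp_all add: share_revenue_def W_def)
  ultimately show ?thesis
    using PQ by (smt (verit, ccfv_SIG) mult_left_mono right_diff_distrib mult.commute)
qed

lemma best_response_small_cell_nonzero: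
  assumes a: "0 < a" "a < 1" and AC: "0 < A" "0 < C" and y: "fst y = 0" "0 \<le> snd y" and "0 < B"
    and br: "best_response a A C B B0 x y"
  shows "fst x \<noteq> 0"
proof
  assume "fst x = 0"
  then have x: "x = (0, B)"
    using best_response_full_budget[OF a AC(2) y(2) br] by (metis prod.collapse add_0)
  define m' where "m' = snd y"
  define e where "e = min B ((A / C) powr (1 / a) * (B + m')) / 2"
  have "0 < (A / C) powr (1 / a) * (B + m')"
    using AC \<open>0 < B\<close> y by (simp add: m'_def)
  then have e: "0 < e" "e \<le> B" "e < (A / C) powr (1 / a) * (B + m')"
    using \<open>0 < B\<close> by (auto simp: e_def)
  have "B0 \<le> 0"
    using br x by (simp add: best_response_def feasible_def)
  then have "game_payoff a A C (e, B - e) y \<le> game_payoff a A C x y"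
    using br e by (simp add: best_response_def feasible_def)
  moreover have "C * share_revenue a B m' < A * share_revenue a e 0 + C * share_revenue a (B - e) m'"
    using share_revenue_entry_gain[OF a AC e(1,2)] e(3) y by (simp add: m'_def)
  ultimately show False
    using x y by (simp add: game_payoff_def share_revenue_def m'_def)
qed

lemma best_response_macro_cell_nonzero:
  assumes a: "0 < a" "a < 1" and AC: "0 < A" "0 < C" and y: "0 \<le> fst y" "snd y = 0" and "0 \<le> B0"
    and br: "best_response a A C B B0 x y" and s: "B0 < fst x"
  shows "snd x \<noteq> 0"
proof
  assume "snd x = 0"
  define s s' where "s = fst x" and "s' = fst y"
  have x: "x = (s, 0)"
    using \<open>snd x = 0\<close> by (simp add: s_def prod_eq_iff)
  define e where "e = min (s - B0) ((C / A) powr (1 / a) * (s + s')) / 2"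
  have "0 < (C / A) powr (1 / a) * (s + s')"
    using AC s \<open>0 \<le> B0\<close> y by (simp add: s_def s'_def)
  then have e: "0 < e" "e \<le> s - B0" "e < (C / A) powr (1 / a) * (s + s')"
    using s by (auto simp: e_def s_def)
  have "game_payoff a A C (s - e, e) y \<le> game_payoff a A C x y"
    using br e x by (simp add: best_response_def feasible_def)
  moreover have "A * share_revenue a s s' < C * share_revenue a e 0 + A * share_revenue a (s - e) s'"
    using share_revenue_entry_gain[OF a AC(2,1) e(1), of s s'] e \<open>0 \<le> B0\<close> y by (simp add: s'_def)
  ultimately show False
    using x y by (simp add: game_payoff_def share_revenue_def s'_def)
qed

definition price_ratio :: "real \<Rightarrow> real \<Rightarrow> real \<Rightarrow> real \<Rightarrow> real \<Rightarrow> real" where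
  "price_ratio a A C S M = A * S powr (- a) / (C * M powr (- a))"

text \<open>First-order conditions of an SP holding \<open>s\<close> small-cell and \<open>m\<close> macro-cell bandwidth when the
  aggregate bandwidths are \<open>S\<close> and \<open>M\<close> and \<open>k\<close> is the ratio of the two marginal prices.\<close>
definition kkt :: "real \<Rightarrow> real \<Rightarrow> real \<Rightarrow> real \<Rightarrow> real \<Rightarrow> real \<Rightarrow> real \<Rightarrow> bool" where
  "kkt a k S M B0 s m \<longleftrightarrow>
     (B0 < s \<longrightarrow> 1 - a * (m / M) \<le> k * (1 - a * (s / S))) \<and>
     (0 < m \<longrightarrow> k * (1 - a * (s / S)) \<le> 1 - a * (m / M))"

lemma payoff_slope_eq:
  assumes "0 < C" "0 < snd x + snd y"
  shows "payoff_slope a A C x y = C * (snd x + snd y) powr (- a) *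
    (price_ratio a A C (fst x + fst y) (snd x + snd y) * (1 - a * (fst x / (fst x + fst y)))
      - (1 - a * (snd x / (snd x + snd y))))"
proof -
  have "C * (snd x + snd y) powr (- a) \<noteq> 0"
    using assms by simp
  then show ?thesis
    unfolding payoff_slope_def share_marginal_def price_ratio_def by (simp add: right_diff_distrib)
qed

lemma payoff_slope_sign:
  assumes "0 < C" "0 < snd x + snd y"
  shows "0 \<le> payoff_slope a A C x y \<longleftrightarrow> 1 - a * (snd x / (snd x + snd y))
      \<le> price_ratio a A C (fst x + fst y) (snd x + snd y) * (1 - a * (fst x / (fst x + fst y)))"
    and "payoff_slope a A C x y \<le> 0 \<longleftrightarrow>
      price_ratio a A C (fst x + fst y) (snd x + snd y) * (1 - a * (fst x / (fst x + fst y)))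
      \<le> 1 - a * (snd x / (snd x + snd y))"
proof -
  have "0 < C * (snd x + snd y) powr (- a)"
    using assms by simp
  then obtain D where "0 < D" and "payoff_slope a A C x y = D *
      (price_ratio a A C (fst x + fst y) (snd x + snd y) * (1 - a * (fst x / (fst x + fst y)))
        - (1 - a * (snd x / (snd x + snd y))))"
    using payoff_slope_eq[OF assms] by blast
  then show "0 \<le> payoff_slope a A C x y \<longleftrightarrow> 1 - a * (snd x / (snd x + snd y))
      \<le> price_ratio a A C (fst x + fst y) (snd x + snd y) * (1 - a * (fst x / (fst x + fst y)))"
    and "payoff_slope a A C x y \<le> 0 \<longleftrightarrow>
      price_ratio a A C (fst x + fst y) (snd x + snd y) * (1 - a * (fst x / (fst x + fst y)))
      \<le> 1 - a * (snd x / (snd x + snd y))"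
    by (simp_all add: zero_le_mult_iff mult_le_0_iff)
qed

lemma kkt_if_best_response:
  assumes "0 < C" and br: "best_response a A C B B0 x y"
    and pos: "0 < fst x + fst y" "0 < snd x + snd y"
  shows "kkt a (price_ratio a A C (fst x + fst y) (snd x + snd y)) (fst x + fst y) (snd x + snd y)
    B0 (fst x) (snd x)"
  using best_response_slope_nonneg[OF br pos] best_response_slope_nonpos[OF br pos]
  unfolding kkt_def payoff_slope_sign[OF \<open>0 < C\<close> pos(2)] by blast

lemma best_response_if_kkt:
  assumes a: "0 < a" "a < 1" and AC: "0 < A" "0 < C" and y: "0 \<le> fst y" "0 \<le> snd y"
    and "0 \<le> B0" and x: "feasible B B0 x" "fst x + snd x = B"
    and pos: "0 < fst x + fst y" "0 < snd x + snd y"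
    and kkt: "kkt a (price_ratio a A C (fst x + fst y) (snd x + snd y)) (fst x + fst y)
      (snd x + snd y) B0 (fst x) (snd x)"
  shows "best_response a A C B B0 x y"
  using kkt best_response_if_slope[OF a AC y \<open>0 \<le> B0\<close> x pos]
  unfolding kkt_def payoff_slope_sign[OF AC(2) pos(2)] by blast

lemma kkt_small_share_less:
  assumes a: "0 < a" "a < 1" and "k < 1" "0 \<le> s" "s \<le> S" "B0 < s" and kkt: "kkt a k S M B0 s m"
  shows "s / S < m / M"
proof -
  have "s / S \<le> 1"
    using assms by (cases "S = 0") auto
  then have "0 < 1 - a * (s / S)"
    using a mult_left_le[of "s / S" a] by simp
  then have "k * (1 - a * (s / S)) < 1 - a * (s / S)"
    using \<open>k < 1\<close> by (simp add: mult_strict_right_mono)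
  then have "a * (s / S) < a * (m / M)"
    using kkt \<open>B0 < s\<close> unfolding kkt_def by linarith
  then show ?thesis
    using a by (metis mult_less_cancel_left_pos)
qed

lemma kkt_macro_share_less:
  assumes a: "0 < a" "a < 1" and "1 < k" "0 \<le> s" "s \<le> S" "0 < m" and kkt: "kkt a k S M B0 s m"
  shows "m / M < s / S"
proof -
  have "s / S \<le> 1"
    using assms by (cases "S = 0") auto
  then have "0 < 1 - a * (s / S)"
    using a mult_left_le[of "s / S" a] by simp
  then have "1 - a * (s / S) < k * (1 - a * (s / S))"
    using \<open>1 < k\<close> by (simp add: mult_strict_right_mono)
  then have "a * (m / M) < a * (s / S)"
    using kkt \<open>0 < m\<close> unfolding kkt_def by linarith
  then show ?thesis
    using a by (metis mult_less_cancel_left_pos)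
qed

lemma kkt_price_ratio_le_one:
  assumes a: "0 < a" "a < 1" and nonneg: "0 \<le> s1" "0 \<le> s2" "0 \<le> m1" "0 \<le> m2"
    and "0 < m1 + m2"
    and kkt: "kkt a k (s1 + s2) (m1 + m2) B10 s1 m1" "kkt a k (s1 + s2) (m1 + m2) B20 s2 m2"
  shows "k \<le> 1"
proof (rule ccontr)
  assume "\<not> k \<le> 1"
  define S M where "S = s1 + s2" and "M = m1 + m2"
  have share_less: "0 < m \<Longrightarrow> m / M < s / S" and share_le: "m / M \<le> s / S"
    if "kkt a k S M B0 s m" "0 \<le> s" "s \<le> S" "0 \<le> m" for s m B0
  proof -
    show "0 < m \<Longrightarrow> m / M < s / S"
      using kkt_macro_share_less[OF a _ that(2,3) _ that(1)] \<open>\<not> k \<le> 1\<close> by simp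
    then show "m / M \<le> s / S"
      using that by (cases "m = 0") auto
  qed
  have kkt': "kkt a k S M B10 s1 m1" "kkt a k S M B20 s2 m2" and "s1 \<le> S" "s2 \<le> S"
    using kkt nonneg by (simp_all add: S_def M_def)
  note share1 = share_less[OF kkt'(1) nonneg(1) \<open>s1 \<le> S\<close> nonneg(3)]
    share_le[OF kkt'(1) nonneg(1) \<open>s1 \<le> S\<close> nonneg(3)]
  note share2 = share_less[OF kkt'(2) nonneg(2) \<open>s2 \<le> S\<close> nonneg(4)]
    share_le[OF kkt'(2) nonneg(2) \<open>s2 \<le> S\<close> nonneg(4)]
  have sums: "m1 / M + m2 / M = 1" "s1 / S + s2 / S \<le> 1"
    using \<open>0 < m1 + m2\<close> nonneg by (cases "S = 0") (auto simp: S_def M_def add_divide_distrib[symmetric])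
  consider "0 < m1" | "0 < m2"
    using \<open>0 < m1 + m2\<close> nonneg by linarith
  then show False
  proof cases
    case 1
    then show False
      using share1(1)[OF 1] share2(2) sums by linarith
  next
    case 2
    then show False
      using share1(2) share2(1)[OF 2] sums by linarith
  qed
qed

lemma kkt_not_both_above_floor:
  assumes a: "0 < a" "a < 1" and "k < 1" and nonneg: "0 \<le> s1" "0 \<le> s2"
    and pos: "0 < s1 + s2" "0 < m1 + m2"
    and kkt: "kkt a k (s1 + s2) (m1 + m2) B10 s1 m1" "kkt a k (s1 + s2) (m1 + m2) B20 s2 m2"
    and above: "B10 < s1" "B20 < s2"
  shows False
proof -
  have "s1 / (s1 + s2) < m1 / (m1 + m2)" "s2 / (s1 + s2) < m2 / (m1 + m2)"
    using kkt_small_share_less[OF a \<open>k < 1\<close> _ _ above(1) kkt(1)]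
      kkt_small_share_less[OF a \<open>k < 1\<close> _ _ above(2) kkt(2)] nonneg by simp_all
  moreover have "s1 / (s1 + s2) + s2 / (s1 + s2) = 1" "m1 / (m1 + m2) + m2 / (m1 + m2) = 1"
    using pos by (simp_all add: add_divide_distrib[symmetric])
  ultimately show False
    by linarith
qed

lemma kkt_share_unique:
  assumes pos: "0 < a" "0 < k" "0 < S" "0 < M"
    and kkt: "kkt a k S M B0 s m" "kkt a k S M B0 t n"
    and budget: "s + m = t + n" and lower: "B0 \<le> s" "B0 \<le> t" "0 \<le> m" "0 \<le> n"
  shows "s = t"
proof -
  have False
    if "s' < t'" "kkt a k S M B0 s' m'" "kkt a k S M B0 t' n'" "s' + m' = t' + n'" "B0 \<le> s'" "0 \<le> n'"
    for s' m' t' n'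
  proof -
    have "1 - a * (n' / M) \<le> k * (1 - a * (t' / S))" "k * (1 - a * (s' / S)) \<le> 1 - a * (m' / M)"
      using that unfolding kkt_def by auto
    moreover have "k * (1 - a * (t' / S)) < k * (1 - a * (s' / S))"
      using that pos by (simp add: divide_strict_right_mono)
    moreover have "1 - a * (m' / M) < 1 - a * (n' / M)"
      using that pos by (simp add: divide_strict_right_mono)
    ultimately show False
      by linarith
  qed
  then show ?thesis
    using kkt budget lower by (metis linorder_neqE_linordered_idom)
qed

text \<open>If SP \<open>i\<close> held more small-cell bandwidth at the second profile, SP \<open>j\<close> would hold no more (as
  \<open>k' < 1\<close>, not both can exceed their floors), so SP \<open>i\<close>'s small-cell share grows and its macro-cell
  share shrinks; chaining its first-order conditions at both profiles then contradicts \<open>k' < k\<close>.\<close>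
lemma kkt_share_le_if_aggregate_less:
  assumes a: "0 < a" "a < 1" and k: "k' < k" "0 \<le> k" "k \<le> 1"
    and nonneg: "0 \<le> Bi0" "0 \<le> Bj0" "0 \<le> mi" "0 \<le> mj" "0 \<le> ni" "0 \<le> nj"
    and budget: "si + mi = ti + ni" "sj + mj = tj + nj"
    and lower: "Bi0 \<le> si" "Bj0 \<le> sj" "Bj0 \<le> tj"
    and pos: "0 < si + sj" "0 < ni + nj"
    and x: "kkt a k (si + sj) (mi + mj) Bi0 si mi"
    and y: "kkt a k' (ti + tj) (ni + nj) Bi0 ti ni" "kkt a k' (ti + tj) (ni + nj) Bj0 tj nj"
    and less: "si + sj < ti + tj"
  shows "ti \<le> si"
proof (rule ccontr)
  assume "\<not> ti \<le> si"
  define S M S' M' where "S = si + sj" and "M = mi + mj" and "S' = ti + tj" and "M' = ni + nj"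
  have pos': "0 < S" "0 < S'" "0 < M'" "M' < M"
    using pos less budget by (simp_all add: S_def S'_def M_def M'_def)
  have shares: "ti / S' + tj / S' = 1" "si / S + sj / S = 1" "ni / M' + nj / M' = 1"
    "mi / M + mj / M = 1"
    using pos' by (simp_all add: S_def S'_def M_def M'_def add_divide_distrib[symmetric])
  have "tj \<le> sj"
  proof (rule ccontr)
    assume "\<not> tj \<le> sj"
    show False
      by (rule kkt_not_both_above_floor[OF a _ _ _ _ pos(2) y])
        (use k \<open>\<not> ti \<le> si\<close> \<open>\<not> tj \<le> sj\<close> lower nonneg in linarith)+
  qed
  have "tj / S' \<le> sj / S"
  proof -
    have "tj / S' \<le> tj / S"
      using lower nonneg pos' less by (simp add: S_def S'_def frac_le)
    also have "\<dots> \<le> sj / S"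
      using \<open>tj \<le> sj\<close> pos' by (simp add: divide_right_mono)
    finally show ?thesis .
  qed
  then have small_shares: "si / S \<le> ti / S'"
    using shares by linarith
  have "mj / M \<le> nj / M'"
  proof -
    have "mj / M \<le> nj / M"
      using budget \<open>tj \<le> sj\<close> pos' by (simp add: divide_right_mono)
    also have "\<dots> \<le> nj / M'"
      using nonneg pos' by (simp add: frac_le)
    finally show ?thesis .
  qed
  then have macro_shares: "ni / M' \<le> mi / M"
    using shares by linarith
  have "ti / S' \<le> 1"
    using lower nonneg pos' by (simp add: S'_def)
  then have "0 < 1 - a * (ti / S')"
    using mult_left_le[of "ti / S'" a] a by linarith
  have "1 - a * (ni / M') \<le> k' * (1 - a * (ti / S'))"
    using y(1) \<open>\<not> ti \<le> si\<close> lower unfolding kkt_def S'_def M'_def by simp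
  also have "\<dots> < k * (1 - a * (ti / S'))"
    using k \<open>0 < 1 - a * (ti / S')\<close> by (simp add: mult_strict_right_mono)
  also have "\<dots> \<le> k * (1 - a * (si / S))"
  proof (rule mult_left_mono)
    show "1 - a * (ti / S') \<le> 1 - a * (si / S)"
      using mult_left_mono[OF small_shares, of a] a by linarith
  qed (use k in simp)
  also have "\<dots> \<le> 1 - a * (mi / M)"
    using x budget \<open>\<not> ti \<le> si\<close> nonneg unfolding kkt_def S_def M_def by simp
  also have "\<dots> \<le> 1 - a * (ni / M')"
    using mult_left_mono[OF macro_shares, of a] a by linarith
  finally show False
    by simp
qed

definition kkt_root :: "real \<Rightarrow> real \<Rightarrow> real \<Rightarrow> real \<Rightarrow> real \<Rightarrow> real" where
  "kkt_root a k S M Bi = (k - 1 + a * Bi / M) / (a * (k / S + 1 / M))"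

lemma kkt_root_gap:
  assumes "0 < a" "0 \<le> k" "0 < S" "0 < M"
  shows "k * (1 - a * (s / S)) - (1 - a * ((Bi - s) / M))
    = a * (k / S + 1 / M) * (kkt_root a k S M Bi - s)"
proof -
  define D where "D = a * (k / S + 1 / M)"
  have "0 < D"
    using assms by (simp add: D_def add_nonneg_pos)
  moreover have "kkt_root a k S M Bi = (k - 1 + a * Bi / M) / D"
    by (simp add: kkt_root_def D_def)
  ultimately have "D * (kkt_root a k S M Bi - s) = (k - 1 + a * Bi / M) - D * s"
    by (simp add: right_diff_distrib)
  also have "\<dots> = k * (1 - a * (s / S)) - (1 - a * ((Bi - s) / M))"
    using assms by (simp add: D_def field_simps)
  finally show ?thesis
    by (simp add: D_def)
qed

lemma kkt_clamped_kkt_root: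
  assumes "0 < a" "0 \<le> k" "0 < S" "0 < M" "B0 \<le> Bi"
  defines "r \<equiv> max B0 (min Bi (kkt_root a k S M Bi))"
  shows "kkt a k S M B0 r (Bi - r)"
  unfolding kkt_def
proof (intro conjI impI)
  have D: "0 < a * (k / S + 1 / M)"
    using assms by (simp add: add_nonneg_pos)
  note gap = kkt_root_gap[OF assms(1-4), of r Bi]
  show "1 - a * ((Bi - r) / M) \<le> k * (1 - a * (r / S))" if "B0 < r"
  proof -
    have "r \<le> kkt_root a k S M Bi"
      using that by (auto simp: r_def)
    then have "0 \<le> a * (k / S + 1 / M) * (kkt_root a k S M Bi - r)"
      using D by simp
    then show ?thesis
      using gap by linarith
  qed
  show "k * (1 - a * (r / S)) \<le> 1 - a * ((Bi - r) / M)" if "0 < Bi - r"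
  proof -
    have "kkt_root a k S M Bi \<le> r"
      using that \<open>B0 \<le> Bi\<close> by (auto simp: r_def)
    then have "a * (k / S + 1 / M) * (kkt_root a k S M Bi - r) \<le> 0"
      using D by (simp add: mult_nonneg_nonpos)
    then show ?thesis
      using gap by linarith
  qed
qed

lemma kkt_root_at_one:
  assumes "0 < a" "0 < S" "0 < M"
  shows "kkt_root a 1 S M Bi = Bi * S / (S + M)"
proof -
  have "0 < a * (S + M)"
    using assms by simp
  then show ?thesis
    using assms by (simp add: kkt_root_def field_simps)
qed

lemma kkt_root_le:
  assumes a: "0 < a" "a < 1" and k: "0 \<le> k" "k \<le> 1 - a" and "0 < S" "0 < M" "M \<le> Bi"
  shows "kkt_root a k S M Bi \<le> Bi - M"
proof -
  have "0 < a * (k / S + 1 / M)"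
    using assms by (simp add: add_nonneg_pos)
  moreover have "k - 1 + a * Bi / M \<le> a * (k / S + 1 / M) * (Bi - M)"
  proof -
    have "a * (k / S + 1 / M) * (Bi - M) - (k - 1 + a * Bi / M) = a * k * (Bi - M) / S + (1 - a - k)"
      using assms by (simp add: field_simps)
    moreover have "0 \<le> a * k * (Bi - M) / S"
      using assms by simp
    ultimately show ?thesis
      using k by linarith
  qed
  ultimately show ?thesis
    by (simp add: kkt_root_def divide_le_eq mult.commute)
qed

lemma price_ratio_eq:
  assumes "0 < S" "0 < M"
  shows "price_ratio a A C S M = A / C * (M / S) powr a"
  using assms by (simp add: price_ratio_def powr_minus powr_divide field_simps)

lemma price_ratio_strict_antimono:
  assumes "0 < a" "0 < A" "0 < C" "0 < S" "S < S'" "0 < M'" "M' < M"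
  shows "price_ratio a A C S' M' < price_ratio a A C S M"
  unfolding price_ratio_def
proof (rule frac_less2)
  show "0 < A * S' powr (- a)" "0 < C * M powr (- a)"
    using assms by simp_all
  show "A * S' powr (- a) \<le> A * S powr (- a)" "C * M powr (- a) < C * M' powr (- a)"
    using assms by (simp_all add: powr_less_mono2_neg less_imp_le)
qed

text \<open>This is the small-cell aggregate of the unconstrained equilibrium, \<open>B * kap / (1 + kap)\<close> with
  \<open>kap = (A / C) powr (1 / a)\<close>.\<close>
lemma price_ratio_eq_one_exists:
  assumes "0 < a" "0 < A" "0 < C" "0 < B"
  obtains S where "0 < S" "S < B" "price_ratio a A C S (B - S) = 1"
proof
  define kap where "kap = (A / C) powr (1 / a)"
  define M0 where "M0 = B / (1 + kap)"
  have "0 < kap"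
    using assms by (simp add: kap_def)
  then have "0 < M0" "B = (1 + kap) * M0"
    using \<open>0 < B\<close> by (simp_all add: M0_def)
  then have "B - kap * M0 = M0"
    by (simp add: algebra_simps)
  then have S: "0 < kap * M0" "kap * M0 < B" "(B - kap * M0) / (kap * M0) = 1 / kap"
    using \<open>0 < kap\<close> \<open>0 < M0\<close> by simp_all
  then show "0 < kap * M0" "kap * M0 < B"
    by simp_all
  have "kap powr a = A / C"
    using assms by (simp add: kap_def powr_powr)
  with S show "price_ratio a A C (kap * M0) (B - kap * M0) = 1"
    using \<open>0 < kap\<close> assms by (simp add: price_ratio_eq powr_divide)
qed

lemma price_ratio_le_near_full:
  assumes a: "0 < a" "a < 1" and AC: "0 < A" "0 < C" and "0 < B" "0 < \<epsilon>"
  obtains M where "0 < M" "M \<le> \<epsilon>" "price_ratio a A C (B - M) M \<le> 1 - a"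
proof
  define q where "q = ((1 - a) * C / A) powr (1 / a)"
  have "0 < q"
    using a AC by (simp add: q_def)
  define M where "M = min \<epsilon> (min (B / 2) (B / 2 * q))"
  show "0 < M" "M \<le> \<epsilon>"
    using \<open>0 < B\<close> \<open>0 < \<epsilon>\<close> \<open>0 < q\<close> by (auto simp: M_def)
  have M: "0 < M" "M \<le> B / 2"
    using \<open>0 < B\<close> \<open>0 < \<epsilon>\<close> \<open>0 < q\<close> by (auto simp: M_def)
  have "M / (B - M) \<le> M / (B / 2)"
    using M by (intro divide_left_mono) auto
  also have "\<dots> \<le> q"
    using \<open>0 < B\<close> by (simp add: M_def field_simps)
  finally have "(M / (B - M)) powr a \<le> q powr a"
    using M a by (intro powr_mono2) auto
  also have "q powr a = (1 - a) * C / A"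
    using a AC by (simp add: q_def powr_powr)
  finally show "price_ratio a A C (B - M) M \<le> 1 - a"
    using M AC \<open>0 < B\<close> by (simp add: price_ratio_eq field_simps)
qed

locale bandwidth_game =
  fixes a A C B1 B2 B10 B20 :: real
  assumes a: "0 < a" "a < 1" and AC: "0 < A" "0 < C" and B: "0 < B1" "0 < B2"
    and B0: "0 \<le> B10" "B10 \<le> B1" "0 \<le> B20" "B20 \<le> B2"
begin

abbreviation is_equilibrium :: "real \<times> real \<Rightarrow> real \<times> real \<Rightarrow> bool" where
  "is_equilibrium \<equiv> equilibrium a A C B1 B2 B10 B20"

definition interior_equilibrium :: "real \<Rightarrow> real \<Rightarrow> real \<Rightarrow> real \<Rightarrow> bool" where
  "interior_equilibrium s1 m1 s2 m2 \<longleftrightarrow>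
     0 < s1 + s2 \<and> 0 < m1 + m2 \<and> s1 + m1 = B1 \<and> s2 + m2 = B2 \<and>
     B10 \<le> s1 \<and> B20 \<le> s2 \<and> 0 \<le> m1 \<and> 0 \<le> m2 \<and>
     kkt a (price_ratio a A C (s1 + s2) (m1 + m2)) (s1 + s2) (m1 + m2) B10 s1 m1 \<and>
     kkt a (price_ratio a A C (s1 + s2) (m1 + m2)) (s1 + s2) (m1 + m2) B20 s2 m2"

lemma equilibrium_cases:
  assumes "is_equilibrium (s1, m1) (s2, m2)"
  shows "(B10 = B1 \<and> B20 = B2 \<and> s1 = B1 \<and> m1 = 0 \<and> s2 = B2 \<and> m2 = 0)
    \<or> interior_equilibrium s1 m1 s2 m2"
proof -
  have br1: "best_response a A C B1 B10 (s1, m1) (s2, m2)"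
    and br2: "best_response a A C B2 B20 (s2, m2) (s1, m1)"
    using assms by (simp_all add: equilibrium_def)
  have lower: "B10 \<le> s1" "0 \<le> m1" "B20 \<le> s2" "0 \<le> m2"
    using br1 br2 by (auto simp: best_response_def feasible_def)
  have full: "s1 + m1 = B1" "s2 + m2 = B2"
    using best_response_full_budget[OF a AC(2) _ br1] best_response_full_budget[OF a AC(2) _ br2]
      lower by simp_all
  have "s1 + s2 \<noteq> 0"
  proof
    assume "s1 + s2 = 0"
    then have "s1 = 0" "s2 = 0"
      using lower B0 by linarith+
    then show False
      using best_response_small_cell_nonzero[OF a AC _ _ B(1) br1] lower by simp
  qed
  show ?thesis
  proof (cases "m1 + m2 = 0")
    case True
    then have "m1 = 0" "m2 = 0"
      using lower by linarith+
    moreover have "0 \<le> s1" "0 \<le> s2"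
      using lower B0 by linarith+
    ultimately have "\<not> B10 < s1" "\<not> B20 < s2"
      using best_response_macro_cell_nonzero[OF a AC _ _ B0(1) br1]
        best_response_macro_cell_nonzero[OF a AC _ _ B0(3) br2] by auto
    then have "s1 = B10" "s2 = B20"
      using lower by linarith+
    then show ?thesis
      using \<open>m1 = 0\<close> \<open>m2 = 0\<close> lower full by auto
  next
    case False
    then have pos: "0 < s1 + s2" "0 < m1 + m2"
      using \<open>s1 + s2 \<noteq> 0\<close> lower B0 by linarith+
    then have "kkt a (price_ratio a A C (s1 + s2) (m1 + m2)) (s1 + s2) (m1 + m2) B10 s1 m1"
      "kkt a (price_ratio a A C (s2 + s1) (m2 + m1)) (s2 + s1) (m2 + m1) B20 s2 m2"
      using kkt_if_best_response[OF AC(2) br1] kkt_if_best_response[OF AC(2) br2] by (simp_all add: add.commute)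
    then show ?thesis
      unfolding interior_equilibrium_def using pos full lower by (simp add: add.commute)
  qed
qed

lemma interior_price_ratio_le_one:
  assumes "interior_equilibrium s1 m1 s2 m2"
  shows "price_ratio a A C (s1 + s2) (m1 + m2) \<le> 1"
  using assms B0 kkt_price_ratio_le_one[OF a, of s1 s2 m1 m2]
  unfolding interior_equilibrium_def by auto

lemma equilibrium_aggregates:
  assumes "is_equilibrium (s1, m1) (s2, m2)"
  shows "0 \<le> s1 + s2" "0 \<le> m1 + m2" "(s1 + s2) + (m1 + m2) = B1 + B2"
    and "A * (m1 + m2) powr a \<le> C * (s1 + s2) powr a"
proof -
  from equilibrium_cases[OF assms]
  consider "B10 = B1" "B20 = B2" "s1 = B1" "m1 = 0" "s2 = B2" "m2 = 0"
    | "interior_equilibrium s1 m1 s2 m2"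
    by blast
  then have "0 \<le> s1 + s2 \<and> 0 \<le> m1 + m2 \<and> (s1 + s2) + (m1 + m2) = B1 + B2
    \<and> A * (m1 + m2) powr a \<le> C * (s1 + s2) powr a"
  proof cases
    case 1
    then show ?thesis
      using B AC by simp
  next
    case 2
    then have pos: "0 < s1 + s2" "0 < m1 + m2"
      unfolding interior_equilibrium_def by simp_all
    have "A / C * ((m1 + m2) / (s1 + s2)) powr a \<le> 1"
      using interior_price_ratio_le_one[OF 2] price_ratio_eq[OF pos] by simp
    then have "A * (m1 + m2) powr a \<le> C * (s1 + s2) powr a"
      using pos AC by (simp add: powr_divide field_simps)
    then show ?thesis
      using 2 unfolding interior_equilibrium_def by simp
  qed
  then show "0 \<le> s1 + s2" "0 \<le> m1 + m2" "(s1 + s2) + (m1 + m2) = B1 + B2"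
    and "A * (m1 + m2) powr a \<le> C * (s1 + s2) powr a"
    by simp_all
qed

lemma interior_aggregate_le:
  assumes x: "interior_equilibrium s1 m1 s2 m2" and y: "interior_equilibrium t1 n1 t2 n2"
  shows "t1 + t2 \<le> s1 + s2"
proof (rule ccontr)
  assume "\<not> t1 + t2 \<le> s1 + s2"
  then have less: "s1 + s2 < t1 + t2" "s2 + s1 < t2 + t1"
    by simp_all
  define k k' where "k = price_ratio a A C (s1 + s2) (m1 + m2)"
    and "k' = price_ratio a A C (t1 + t2) (n1 + n2)"
  have xs: "0 < s1 + s2" "0 < m1 + m2" "s1 + m1 = B1" "s2 + m2 = B2" "B10 \<le> s1" "B20 \<le> s2"
    "0 \<le> m1" "0 \<le> m2" "kkt a k (s1 + s2) (m1 + m2) B10 s1 m1" "kkt a k (s2 + s1) (m2 + m1) B20 s2 m2"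
    using x unfolding interior_equilibrium_def k_def by (simp_all add: add.commute)
  have ys: "0 < t1 + t2" "0 < n1 + n2" "t1 + n1 = B1" "t2 + n2 = B2" "B10 \<le> t1" "B20 \<le> t2"
    "0 \<le> n1" "0 \<le> n2" "kkt a k' (t1 + t2) (n1 + n2) B10 t1 n1" "kkt a k' (t1 + t2) (n1 + n2) B20 t2 n2"
    "kkt a k' (t2 + t1) (n2 + n1) B20 t2 n2" "kkt a k' (t2 + t1) (n2 + n1) B10 t1 n1"
    using y unfolding interior_equilibrium_def k'_def by (simp_all add: add.commute)
  have budget: "s1 + m1 = t1 + n1" "s2 + m2 = t2 + n2"
    using xs ys by simp_all
  have k: "k' < k" "0 \<le> k" "k \<le> 1"
  proof -
    show "k' < k"
      unfolding k_def k'_def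
      using price_ratio_strict_antimono[OF a(1) AC xs(1) less(1) ys(2)] xs ys less by simp
    show "0 \<le> k"
      using xs AC by (simp add: k_def price_ratio_def)
    show "k \<le> 1"
      using interior_price_ratio_le_one[OF x] by (simp add: k_def)
  qed
  have "t1 \<le> s1"
    by (rule kkt_share_le_if_aggregate_less[OF a k B0(1,3) xs(7,8) ys(7,8) budget xs(5,6) ys(6)
          xs(1) ys(2) xs(9) ys(9,10) less(1)])
  moreover have "t2 \<le> s2"
    using kkt_share_le_if_aggregate_less[OF a k B0(3,1) xs(8,7) ys(8,7) budget(2,1) xs(6,5) ys(5)
          _ _ xs(10) ys(11,12) less(2)] xs ys by (simp add: add.commute)
  ultimately show False
    using less by linarith
qed

lemma interior_equilibrium_unique:
  assumes x: "interior_equilibrium s1 m1 s2 m2" and y: "interior_equilibrium t1 n1 t2 n2"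
  shows "s1 = t1 \<and> m1 = n1 \<and> s2 = t2 \<and> m2 = n2"
proof -
  have S: "t1 + t2 = s1 + s2"
    using interior_aggregate_le[OF x y] interior_aggregate_le[OF y x] by simp
  then have M: "n1 + n2 = m1 + m2"
    using x y unfolding interior_equilibrium_def by linarith
  define k where "k = price_ratio a A C (s1 + s2) (m1 + m2)"
  have xs: "0 < s1 + s2" "0 < m1 + m2" "s1 + m1 = B1" "s2 + m2 = B2" "B10 \<le> s1" "B20 \<le> s2"
    "0 \<le> m1" "0 \<le> m2" "kkt a k (s1 + s2) (m1 + m2) B10 s1 m1" "kkt a k (s1 + s2) (m1 + m2) B20 s2 m2"
    using x unfolding interior_equilibrium_def k_def by simp_all
  have ys: "t1 + n1 = B1" "t2 + n2 = B2" "B10 \<le> t1" "B20 \<le> t2" "0 \<le> n1" "0 \<le> n2"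
    "kkt a k (s1 + s2) (m1 + m2) B10 t1 n1" "kkt a k (s1 + s2) (m1 + m2) B20 t2 n2"
    using y unfolding interior_equilibrium_def k_def S M by simp_all
  have "0 < k"
    using xs AC by (simp add: k_def price_ratio_def)
  then have "s1 = t1" "s2 = t2"
    using kkt_share_unique[OF a(1) _ xs(1,2)] xs ys by simp_all
  then show ?thesis
    using xs ys by simp
qed

lemma equilibrium_unique:
  assumes "is_equilibrium x1 x2" "is_equilibrium y1 y2"
  shows "x1 = y1 \<and> x2 = y2"
proof -
  obtain s1 m1 s2 m2 t1 n1 t2 n2
    where eq: "x1 = (s1, m1)" "x2 = (s2, m2)" "y1 = (t1, n1)" "y2 = (t2, n2)"
    by (metis prod.collapse)
  have cases: "(B10 = B1 \<and> B20 = B2 \<and> s1 = B1 \<and> m1 = 0 \<and> s2 = B2 \<and> m2 = 0)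
      \<or> interior_equilibrium s1 m1 s2 m2"
    "(B10 = B1 \<and> B20 = B2 \<and> t1 = B1 \<and> n1 = 0 \<and> t2 = B2 \<and> n2 = 0)
      \<or> interior_equilibrium t1 n1 t2 n2"
    using equilibrium_cases assms eq by simp_all
  have "\<not> interior_equilibrium u1 v1 u2 v2" if "B10 = B1" "B20 = B2" for u1 v1 u2 v2
    using that unfolding interior_equilibrium_def by linarith
  then show ?thesis
    using cases interior_equilibrium_unique eq by metis
qed

definition clamped_root :: "real \<Rightarrow> real \<Rightarrow> real \<Rightarrow> real" where
  "clamped_root Bi Bi0 S =
     max Bi0 (min Bi (kkt_root a (price_ratio a A C S (B1 + B2 - S)) S (B1 + B2 - S) Bi))"

lemma equilibrium_if_aggregate_fixed_point:
  assumes "0 < S" "S < B1 + B2" and fixed: "clamped_root B1 B10 S + clamped_root B2 B20 S = S"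
  shows "is_equilibrium (clamped_root B1 B10 S, B1 - clamped_root B1 B10 S)
    (clamped_root B2 B20 S, B2 - clamped_root B2 B20 S)"
proof -
  define M r1 r2 where "M = B1 + B2 - S"
    and "r1 = clamped_root B1 B10 S" and "r2 = clamped_root B2 B20 S"
  have "0 < M" "0 \<le> price_ratio a A C S M"
    using assms AC by (simp_all add: M_def price_ratio_def)
  have best: "best_response a A C Bi Bi0 (ri, Bi - ri) (rj, Bj - rj)"
    if "kkt a (price_ratio a A C S M) S M Bi0 ri (Bi - ri)" "ri + rj = S" "Bi - ri + (Bj - rj) = M"
      "0 \<le> Bi0" "Bi0 \<le> ri" "ri \<le> Bi" "0 \<le> rj" "rj \<le> Bj"
    for Bi Bi0 Bj ri rj
    using best_response_if_kkt[OF a AC, of "(rj, Bj - rj)" Bi0 Bi "(ri, Bi - ri)"] that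
      \<open>0 < S\<close> \<open>0 < M\<close> by (simp add: feasible_def)
  have "kkt a (price_ratio a A C S M) S M B10 r1 (B1 - r1)"
    "kkt a (price_ratio a A C S M) S M B20 r2 (B2 - r2)"
    using kkt_clamped_kkt_root[OF a(1) \<open>0 \<le> price_ratio a A C S M\<close> \<open>0 < S\<close> \<open>0 < M\<close>] B0
    by (simp_all add: r1_def r2_def clamped_root_def M_def)
  moreover have "B10 \<le> r1" "r1 \<le> B1" "B20 \<le> r2" "r2 \<le> B2"
    using B0 by (auto simp: r1_def r2_def clamped_root_def)
  moreover have "r1 + r2 = S" "r2 + r1 = S" "B1 - r1 + (B2 - r2) = M" "B2 - r2 + (B1 - r1) = M"
    using fixed by (simp_all add: r1_def r2_def M_def)
  ultimately show ?thesis
    unfolding equilibrium_def r1_def[symmetric] r2_def[symmetric] using B0 best by simp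
qed

lemma clamped_root_sum_ge:
  assumes "0 < S" "S < B1 + B2" and "price_ratio a A C S (B1 + B2 - S) = 1"
  shows "S \<le> clamped_root B1 B10 S + clamped_root B2 B20 S"
proof -
  have "Bi * S / (B1 + B2) \<le> clamped_root Bi Bi0 S" if "0 < Bi" for Bi Bi0
  proof -
    have "Bi * S \<le> Bi * (B1 + B2)"
      using assms that by simp
    then have "Bi * S / (B1 + B2) \<le> Bi"
      using B by (simp add: divide_le_eq)
    moreover have "kkt_root a 1 S (B1 + B2 - S) Bi = Bi * S / (B1 + B2)"
      using kkt_root_at_one[OF a(1) \<open>0 < S\<close>, of "B1 + B2 - S"] assms by simp
    ultimately show ?thesis
      using assms by (simp add: clamped_root_def)
  qed
  moreover have "B1 + B2 \<noteq> 0"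
    using B by simp
  then have "B1 * S / (B1 + B2) + B2 * S / (B1 + B2) = S"
    unfolding add_divide_distrib[symmetric] distrib_right[symmetric] by simp
  ultimately show ?thesis
    using B by (smt (verit))
qed

lemma clamped_root_sum_le:
  assumes "0 < S" "S < B1 + B2" and "price_ratio a A C S (B1 + B2 - S) \<le> 1 - a"
    and "B1 + B2 - S \<le> B1" "B1 + B2 - S \<le> B2" "B10 + B20 \<le> S"
  shows "clamped_root B1 B10 S + clamped_root B2 B20 S \<le> S"
proof -
  have "0 \<le> price_ratio a A C S (B1 + B2 - S)"
    using assms AC by (simp add: price_ratio_def)
  then have "clamped_root Bi Bi0 S \<le> max Bi0 (Bi - (B1 + B2 - S))" if "B1 + B2 - S \<le> Bi" for Bi Bi0
    using kkt_root_le[OF a _ assms(3) \<open>0 < S\<close> _ that] assms by (auto simp: clamped_root_def)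
  from this[OF assms(4), of B10] this[OF assms(5), of B20] show ?thesis
    using assms B0 by linarith
qed

lemma clamped_root_continuous:
  assumes "0 < S0" "S1 < B1 + B2"
  shows "continuous_on {S0..S1} (clamped_root Bi Bi0)"
proof -
  have nz: "S \<noteq> 0" "B1 + B2 - S \<noteq> 0" "C * (B1 + B2 - S) powr - a \<noteq> 0"
    if "S \<in> {S0..S1}" for S
    using that assms AC by auto
  have "0 < a * (A * S powr - a / (C * (B1 + B2 - S) powr - a) / S + 1 / (B1 + B2 - S))"
    if "S \<in> {S0..S1}" for S
    using that assms a AC by (simp add: add_nonneg_pos)
  then have "a * (A * S powr - a / (C * (B1 + B2 - S) powr - a) / S + 1 / (B1 + B2 - S)) \<noteq> 0"
    if "S \<in> {S0..S1}" for S
    using that by (metis less_irrefl)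
  with nz show ?thesis
    unfolding clamped_root_def kkt_root_def price_ratio_def
    by (intro continuous_intros) blast+
qed

lemma aggregate_fixed_point_exists:
  assumes "B10 + B20 < B1 + B2"
  obtains S where "0 < S" "S < B1 + B2" "clamped_root B1 B10 S + clamped_root B2 B20 S = S"
proof -
  define B where "B = B1 + B2"
  have "0 < B"
    using B by (simp add: B_def)
  then obtain Ss where Ss: "0 < Ss" "Ss < B" "price_ratio a A C Ss (B - Ss) = 1"
    using price_ratio_eq_one_exists a(1) AC by blast
  then have low: "Ss \<le> clamped_root B1 B10 Ss + clamped_root B2 B20 Ss"
    using clamped_root_sum_ge Ss by (simp add: B_def)
  define \<epsilon> where "\<epsilon> = min B1 (min B2 (min (B - B10 - B20) (B - Ss)))"
  have "0 < \<epsilon>"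
    using B Ss assms by (simp add: \<epsilon>_def B_def)
  then obtain M where M: "0 < M" "M \<le> \<epsilon>" "price_ratio a A C (B - M) M \<le> 1 - a"
    using price_ratio_le_near_full[OF a AC \<open>0 < B\<close>] by blast
  then have "Ss \<le> B - M"
    by (simp add: \<epsilon>_def)
  have high: "clamped_root B1 B10 (B - M) + clamped_root B2 B20 (B - M) \<le> B - M"
    using clamped_root_sum_le[of "B - M"] M \<open>0 < B\<close> by (simp add: \<epsilon>_def B_def)
  have "continuous_on {Ss..B - M} (\<lambda>S. clamped_root B1 B10 S + clamped_root B2 B20 S - S)"
    using clamped_root_continuous[of Ss "B - M"] Ss M
    by (intro continuous_intros) (auto simp: B_def)
  then obtain S where "Ss \<le> S" "S \<le> B - M" "clamped_root B1 B10 S + clamped_root B2 B20 S - S = 0"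
    using IVT2'[of "\<lambda>S. clamped_root B1 B10 S + clamped_root B2 B20 S - S" "B - M" 0 Ss]
      low high \<open>Ss \<le> B - M\<close> by auto
  show thesis
  proof (rule that)
    show "0 < S"
      using \<open>Ss \<le> S\<close> Ss(1) by linarith
    show "S < B1 + B2"
      using \<open>S \<le> B - M\<close> M(1) B_def by linarith
    show "clamped_root B1 B10 S + clamped_root B2 B20 S = S"
      using \<open>clamped_root B1 B10 S + clamped_root B2 B20 S - S = 0\<close> by simp
  qed
qed

lemma equilibrium_exists: "\<exists>x1 x2. is_equilibrium x1 x2"
proof (cases "B10 = B1 \<and> B20 = B2")
  case True
  have "feasible Bi Bi z \<longleftrightarrow> z = (Bi, 0)" for Bi z
    by (cases z) (auto simp: feasible_def)
  then have "is_equilibrium (B1, 0) (B2, 0)"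
    using True by (simp add: equilibrium_def best_response_def)
  then show ?thesis
    by blast
next
  case False
  then have "B10 + B20 < B1 + B2"
    using B0 by linarith
  then obtain S where "0 < S" "S < B1 + B2" "clamped_root B1 B10 S + clamped_root B2 B20 S = S"
    by (rule aggregate_fixed_point_exists)
  then show ?thesis
    using equilibrium_if_aggregate_fixed_point by blast
qed

lemma equilibrium_ex1: "\<exists>!p. is_equilibrium (fst p) (snd p)"
proof -
  obtain x1 x2 where x: "is_equilibrium x1 x2"
    using equilibrium_exists by blast
  show ?thesis
  proof (rule ex1I[of _ "(x1, x2)"])
    show "is_equilibrium (fst (x1, x2)) (snd (x1, x2))"
      using x by simp
    fix p
    assume "is_equilibrium (fst p) (snd p)"
    then show "p = (x1, x2)"
      using equilibrium_unique[OF _ x] by (simp add: prod_eq_iff)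
  qed
qed

end

lemma revenue_eq_game_payoff:
  "revenue R0 lamS Nm Nf \<alpha> x y =
    game_payoff \<alpha> (lamS * R0 * (lamS * R0 / Nf) powr (- \<alpha>)) (R0 * (R0 / Nm) powr (- \<alpha>)) x y"
proof -
  have "lamS * (fst x + fst y) * R0 / Nf = (lamS * R0 / Nf) * (fst x + fst y)"
    "(snd x + snd y) * R0 / Nm = (R0 / Nm) * (snd x + snd y)"
    by simp_all
  then show ?thesis
    unfolding revenue_def game_payoff_def share_revenue_def uprime_def Let_def
    by (simp only: powr_mult mult_ac)
qed

lemma is_NE_iff_equilibrium:
  "is_NE R0 lamS Nm Nf \<alpha> B1 B2 B10 B20 = equilibrium \<alpha>
    (lamS * R0 * (lamS * R0 / Nf) powr (- \<alpha>)) (R0 * (R0 / Nm) powr (- \<alpha>)) B1 B2 B10 B20"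
  by (intro ext) (auto simp: is_NE_def equilibrium_def best_response_def revenue_eq_game_payoff)

text \<open>That is, \<open>(N / Nm) powr \<alpha> = A / C\<close> for \<open>N = Nf * lamS powr (1 / \<alpha> - 1)\<close>: \<open>N / Nm\<close> is the ratio of
  small-cell to macro-cell bandwidth at the unconstrained equilibrium.\<close>
lemma price_constants_balance:
  fixes R0 lamS Nm Nf \<alpha> :: real
  assumes "0 < R0" "0 < lamS" "0 < Nm" "0 < Nf" "0 < \<alpha>"
  shows "lamS * R0 * (lamS * R0 / Nf) powr (- \<alpha>) * Nm powr \<alpha> =
    R0 * (R0 / Nm) powr (- \<alpha>) * (Nf * lamS powr (1 / \<alpha> - 1)) powr \<alpha>"
proof -
  have "(lamS powr (1 / \<alpha> - 1)) powr \<alpha> = lamS powr (1 - \<alpha>)"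
  proof -
    have "(1 / \<alpha> - 1) * \<alpha> = 1 - \<alpha>"
      using assms by (simp add: field_simps)
    then show ?thesis
      by (simp add: powr_powr)
  qed
  moreover have "lamS * lamS powr (- \<alpha>) = lamS powr (1 - \<alpha>)"
    using assms by (simp add: powr_diff powr_minus divide_inverse)
  moreover have "(lamS * R0 / Nf) powr (- \<alpha>) = lamS powr (- \<alpha>) * R0 powr (- \<alpha>) * Nf powr \<alpha>"
    "(R0 / Nm) powr (- \<alpha>) = R0 powr (- \<alpha>) * Nm powr \<alpha>"
    using assms by (simp_all add: powr_divide powr_mult powr_minus field_simps)
  ultimately show ?thesis
    by (simp add: powr_mult algebra_simps)
qed

lemma aggregate_ge_of_price_bound:
  fixes a A C N Nm S M :: real
  assumes "0 < a" "0 < A" "0 < N" "0 < Nm" "0 \<le> S" "0 \<le> M"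
    and balance: "A * Nm powr a = C * N powr a" and bound: "A * M powr a \<le> C * S powr a"
  shows "N * (S + M) / (N + Nm) \<le> S"
proof -
  have "A * (N * M) powr a = N powr a * (A * M powr a)"
    by (simp add: powr_mult)
  also have "\<dots> \<le> N powr a * (C * S powr a)"
    using bound by (simp add: mult_left_mono)
  also have "\<dots> = A * (Nm * S) powr a"
    using balance by (simp add: powr_mult algebra_simps)
  finally have "(N * M) powr a \<le> (Nm * S) powr a"
    using \<open>0 < A\<close> by simp
  then have "N * M \<le> Nm * S"
    using powr_less_mono2[OF \<open>0 < a\<close>, of "Nm * S" "N * M"] assms by (meson mult_nonneg_nonneg not_le less_imp_le)
  then show ?thesis
    using assms by (simp add: field_simps)
qed

theorem theorem2:
  fixes R0 lamS Nm Nf \<alpha> B1 B2 B10 B20 :: real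
  assumes "R0 > 0" and "lamS > 1" and "Nm > 0" and "Nf > 0"
    and "0 < \<alpha>" and "\<alpha> < 1"
    and "B1 > 0" and "B2 > 0"
    and "0 \<le> B10" and "B10 \<le> B1" and "0 \<le> B20" and "B20 \<le> B2"
  shows "(\<exists>!p. is_NE R0 lamS Nm Nf \<alpha> B1 B2 B10 B20 (fst p) (snd p)) \<and>
         (\<forall>x1 x2. is_NE R0 lamS Nm Nf \<alpha> B1 B2 B10 B20 x1 x2 \<longrightarrow>
            fst x1 + fst x2 \<ge>
              Nf * lamS powr (1 / \<alpha> - 1) * B1 / (Nf * lamS powr (1 / \<alpha> - 1) + Nm)
            + Nf * lamS powr (1 / \<alpha> - 1) * B2 / (Nf * lamS powr (1 / \<alpha> - 1) + Nm))"
proof -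
  define A C N where "A = lamS * R0 * (lamS * R0 / Nf) powr (- \<alpha>)"
    and "C = R0 * (R0 / Nm) powr (- \<alpha>)" and "N = Nf * lamS powr (1 / \<alpha> - 1)"
  have "0 < A" "0 < C" "0 < N"
    using assms by (simp_all add: A_def C_def N_def)
  interpret bandwidth_game \<alpha> A C B1 B2 B10 B20
    using assms \<open>0 < A\<close> \<open>0 < C\<close> by unfold_locales auto
  have balance: "A * Nm powr \<alpha> = C * N powr \<alpha>"
    unfolding A_def C_def N_def by (rule price_constants_balance) (use assms in auto)
  have "N * B1 / (N + Nm) + N * B2 / (N + Nm) \<le> s1 + s2"
    if "is_equilibrium (s1, m1) (s2, m2)" for s1 m1 s2 m2
  proof -
    note aggregates = equilibrium_aggregates[OF that]
    have "N * ((s1 + s2) + (m1 + m2)) / (N + Nm) \<le> s1 + s2"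
      by (rule aggregate_ge_of_price_bound[OF assms(5) \<open>0 < A\<close> \<open>0 < N\<close> assms(3)
            aggregates(1,2) balance aggregates(4)])
    then show ?thesis
      unfolding aggregates(3) by (simp add: add_divide_distrib[symmetric] distrib_left)
  qed
  then show ?thesis
    using equilibrium_ex1 unfolding is_NE_iff_equilibrium A_def[symmetric] C_def[symmetric]
      N_def[symmetric] by (metis prod.collapse)
qed

end
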